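(* Let $(A,\mathit{Con},\mid\!\sim)$ be an abstract nonmonotonic system and $(B,\mathit{Con}^*,\Delta)$ the normal default structure constructed from it as described in the context. If $P,Q\in\mathit{Con}$ satisfy $Q\subseteq P\subseteq\widetilde{Q}$, then $\widetilde{Q}\cup\{[Q]\}$ is an extension of $P$ in $(B,\mathit{Con}^*,\Delta)$.
   Context: An abstract nonmonotonic system is a triple $(A,\mathit{Con},\mid\!\sim)$ where $\mathit{Con}$ is a collection of finite subsets of $A$ and $\mid\!\sim\ \subseteq\mathit{Con}\times\mathit{Con}$, satisfying: (1) $X\subseteq Y\in\mathit{Con}\Rightarrow X\in\mathit{Con}$; (2) $a\in A\Rightarrow\{a\}\in\mathit{Con}$; (3) $X\mid\!\sim T\Rightarrow X\cup T\in\mathit{Con}$; (4) $Y\subseteq X\Rightarrow X\mid\!\sim Y$; (5) $X\mid\!\sim T$ and $T\cup X\mid\!\sim Y$ imply $X\mid\!\sim Y$; (6) $X\mid\!\sim Y$ and $X\mid\!\sim Z$ imply $X\mid\!\sim Y\cup Z$. Write $X\mid\!\sim a$ for $X\mid\!\sim\{a\}$, and $\widetilde{X}:=\{t\mid X\mid\!\sim\{t\}\}$. Construction: $B:=A\cup\{[X]\mid X\in\mathit{Con}\}$, where $[X]$ are new pairwise distinct tokens. $\Delta:=\{\frac{X:[X]}{[X]}\mid X\in\mathit{Con}\}\cup\{\frac{\{[X]\}:a}{a}\mid X\mid\!\sim a,\ a\notin X\}$. For finite $W\subseteq B$, $W\in\mathit{Con}^*$ iff (i) $W\cap A\in\mathit{Con}$;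 (ii) $W$ contains at most one token of the form $[X]$; (iii) if $[X]\in W$ then $X\mid\!\sim W\setminus\{[X]\}$. An arbitrary subset of $B$ is consistent if all its finite subsets are in $\mathit{Con}^*$. Extensions in $(B,\mathit{Con}^*,\Delta)$: for consistent $x\subseteq B$ and $S\subseteq B$, $\phi(x,S,0)=x$, $\phi(x,S,i+1)=\phi(x,S,i)\cup\{a\mid\frac{X:a}{a}\in\Delta,\ X\subseteq\phi(x,S,i),\ \{a\}\cup S\text{ consistent}\}$, $\Phi(x,S)=\bigcup_i\phi(x,S,i)$; $y$ is an extension of $x$ if $\Phi(x,y)=y$. *)

theory Defs
  imports Main
begin

definition ans :: "'a set \<Rightarrow> 'a set set \<Rightarrow> ('a set \<Rightarrow> 'a set \<Rightarrow> bool) \<Rightarrow> bool" where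
  "ans A Con rel \<longleftrightarrow>
     (\<forall>X\<in>Con. finite X \<and> X \<subseteq> A) \<and>
     (\<forall>X Y. rel X Y \<longrightarrow> X \<in> Con \<and> Y \<in> Con) \<and>
     (\<forall>X Y. X \<subseteq> Y \<and> Y \<in> Con \<longrightarrow> X \<in> Con) \<and>
     (\<forall>a\<in>A. {a} \<in> Con) \<and>
     (\<forall>X T. rel X T \<longrightarrow> X \<union> T \<in> Con) \<and>
     (\<forall>X Y. X \<in> Con \<and> Y \<subseteq> X \<longrightarrow> rel X Y) \<and>
     (\<forall>X T Y. rel X T \<and> rel (T \<union> X) Y \<longrightarrow> rel X Y) \<and>
     (\<forall>X Y Z. rel X Y \<and> rel X Z \<longrightarrow> rel X (Y \<union> Z))"

definition tilde :: "('a set \<Rightarrow> 'a set \<Rightarrow> bool) \<Rightarrow> 'a set \<Rightarrow> 'a set" where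
  "tilde rel X = {t. rel X {t}}"

text \<open>Tokens of B: elements of A (Atom a) and new tokens [X] (Brk X).\<close>
datatype 'a tok = Atom 'a | Brk "'a set"

definition atoms :: "'a tok set \<Rightarrow> 'a set" where
  "atoms W = {a. Atom a \<in> W}"

definition Bset :: "'a set \<Rightarrow> 'a set set \<Rightarrow> 'a tok set" where
  "Bset A Con = Atom ` A \<union> Brk ` Con"

text \<open>Defaults are normal: a pair (X, a) stands for the default X:a/a.\<close>
definition Delta :: "'a set set \<Rightarrow> ('a set \<Rightarrow> 'a set \<Rightarrow> bool) \<Rightarrow> ('a tok set \<times> 'a tok) set" where
  "Delta Con rel =
     {(Atom ` X, Brk X) | X. X \<in> Con} \<union>
     {({Brk X}, Atom a) | X a. rel X {a} \<and> a \<notin> X}"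

definition ConStar :: "'a set \<Rightarrow> 'a set set \<Rightarrow> ('a set \<Rightarrow> 'a set \<Rightarrow> bool) \<Rightarrow> 'a tok set \<Rightarrow> bool" where
  "ConStar A Con rel W \<longleftrightarrow>
     finite W \<and> W \<subseteq> Bset A Con \<and>
     atoms W \<in> Con \<and>
     (\<forall>X Y. Brk X \<in> W \<and> Brk Y \<in> W \<longrightarrow> X = Y) \<and>
     (\<forall>X. Brk X \<in> W \<longrightarrow> rel X (atoms (W - {Brk X})))"

definition consistentB :: "'a set \<Rightarrow> 'a set set \<Rightarrow> ('a set \<Rightarrow> 'a set \<Rightarrow> bool) \<Rightarrow> 'a tok set \<Rightarrow> bool" where
  "consistentB A Con rel x \<longleftrightarrow> (\<forall>W. finite W \<and> W \<subseteq> x \<longrightarrow> ConStar A Con rel W)"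

primrec phi :: "'a set \<Rightarrow> 'a set set \<Rightarrow> ('a set \<Rightarrow> 'a set \<Rightarrow> bool) \<Rightarrow> 'a tok set \<Rightarrow> 'a tok set \<Rightarrow> nat \<Rightarrow> 'a tok set" where
  "phi A Con rel x S 0 = x"
| "phi A Con rel x S (Suc i) = phi A Con rel x S i \<union>
     {a. \<exists>X. (X, a) \<in> Delta Con rel \<and> X \<subseteq> phi A Con rel x S i \<and>
            consistentB A Con rel (insert a S)}"

definition Phi :: "'a set \<Rightarrow> 'a set set \<Rightarrow> ('a set \<Rightarrow> 'a set \<Rightarrow> bool) \<Rightarrow> 'a tok set \<Rightarrow> 'a tok set \<Rightarrow> 'a tok set" where
  "Phi A Con rel x S = (\<Union>i. phi A Con rel x S i)"

definition is_extension :: "'a set \<Rightarrow> 'a set set \<Rightarrow> ('a set \<Rightarrow> 'a set \<Rightarrow> bool) \<Rightarrow> 'a tok set \<Rightarrow> 'a tok set \<Rightarrow> bool" where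
  "is_extension A Con rel x y \<longleftrightarrow> consistentB A Con rel x \<and> Phi A Con rel x y = y"

end

theory Submission
  imports Defs
begin

text \<open>Write y for the set of tokens of the tilde-closure of Q together with [Q]. The set y is
  consistent because, by cumulation (6), Q entails every finite subset of its tilde-closure.
  Starting from P, the default Q:[Q]/[Q] fires at the first stage (as Q is contained in P),
  and then every default {[Q]}:t/t with t in the closure fires at the second, so y is contained
  in Phi(P, y). Conversely, y is closed under every default applicable relative to y: a
  consistent set contains at most one token of the form [Z], so such a default produces either
  [Q] itself or an element of the closure of Q.\<close>

lemma finite_atoms: "finite W \<Longrightarrow> finite (atoms W)"
  unfolding atoms_def by (rule finite_vimageI[of W Atom, simplified vimage_def]) (auto simp: inj_def)

lemma atoms_Diff_Brk [simp]: "atoms (W - {Brk X}) = atoms W"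
  unfolding atoms_def by auto

lemma consistentB_Brk_unique:
  assumes "consistentB A Con rel x" "Brk X \<in> x" "Brk Y \<in> x"
  shows "X = Y"
proof -
  have "ConStar A Con rel {Brk X, Brk Y}"
    using assms unfolding consistentB_def by simp
  then show ?thesis unfolding ConStar_def by blast
qed

lemma phi_Suc_memI:
  "(X, a) \<in> Delta Con rel \<Longrightarrow> X \<subseteq> phi A Con rel x S i \<Longrightarrow> consistentB A Con rel (insert a S)
    \<Longrightarrow> a \<in> phi A Con rel x S (Suc i)"
  by auto

lemma Phi_memI: "a \<in> phi A Con rel x S i \<Longrightarrow> a \<in> Phi A Con rel x S"
  unfolding Phi_def by blast

lemma Phi_subset_closed:
  assumes "x \<subseteq> y"
    and closed: "\<And>X a. (X, a) \<in> Delta Con rel \<Longrightarrow> X \<subseteq> y \<Longrightarrow> consistentB A Con rel (insert a S)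
      \<Longrightarrow> a \<in> y"
  shows "Phi A Con rel x S \<subseteq> y"
proof -
  have "phi A Con rel x S i \<subseteq> y" for i
    by (induction i) (use assms(1) closed in auto)
  then show ?thesis unfolding Phi_def by blast
qed

lemma tilde_Brk_closed_under_Delta:
  assumes "(X, a) \<in> Delta Con rel" "X \<subseteq> Atom ` tilde rel Q \<union> {Brk Q}"
    and "consistentB A Con rel (insert a (Atom ` tilde rel Q \<union> {Brk Q}))"
  shows "a \<in> Atom ` tilde rel Q \<union> {Brk Q}"
proof -
  from assms(1) consider Z where "X = Atom ` Z" "a = Brk Z"
    | Z b where "X = {Brk Z}" "a = Atom b" "rel Z {b}"
    unfolding Delta_def by blast
  then show ?thesis
  proof cases
    case 1
    then have "Z = Q" using consistentB_Brk_unique[OF assms(3)] by blast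
    with 1 show ?thesis by blast
  next
    case 2
    then have "Z = Q" using assms(2) by blast
    with 2 show ?thesis by (simp add: tilde_def)
  qed
qed

context
  fixes A :: "'a set" and Con :: "'a set set" and rel :: "'a set \<Rightarrow> 'a set \<Rightarrow> bool"
  assumes ans: "ans A Con rel"
begin

lemma Con_subset: "X \<in> Con \<Longrightarrow> X \<subseteq> A"
  using ans unfolding ans_def by metis

lemma Con_downward_closed: "X \<subseteq> Y \<Longrightarrow> Y \<in> Con \<Longrightarrow> X \<in> Con"
  using ans unfolding ans_def by metis

lemma rel_Un_Con: "rel X T \<Longrightarrow> X \<union> T \<in> Con"
  using ans unfolding ans_def by metis

lemma rel_subset: "X \<in> Con \<Longrightarrow> Y \<subseteq> X \<Longrightarrow> rel X Y"
  using ans unfolding ans_def by metis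

lemma rel_Un: "rel X Y \<Longrightarrow> rel X Z \<Longrightarrow> rel X (Y \<union> Z)"
  using ans unfolding ans_def by metis

lemma tilde_subset: "tilde rel Q \<subseteq> A"
  using rel_Un_Con Con_subset unfolding tilde_def by blast

lemma rel_finite_subset_tilde:
  assumes "Q \<in> Con" "finite F" "F \<subseteq> tilde rel Q"
  shows "rel Q F"
  using assms(2,3)
proof (induction F rule: finite_induct)
  case empty
  then show ?case using rel_subset[OF assms(1)] by blast
next
  case (insert t F)
  then have "rel Q ({t} \<union> F)" by (intro rel_Un) (auto simp: tilde_def)
  then show ?case by simp
qed

lemma consistentB_Atom_image:
  assumes "P \<in> Con"
  shows "consistentB A Con rel (Atom ` P)"
  unfolding consistentB_def ConStar_def
proof (intro allI impI, intro conjI)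
  fix W assume W: "finite W \<and> W \<subseteq> Atom ` P"
  then show "finite W" "W \<subseteq> Bset A Con"
    using Con_subset[OF assms] unfolding Bset_def by blast+
  have "atoms W \<subseteq> P"
    using W by (auto simp: atoms_def)
  then show "atoms W \<in> Con"
    using assms by (rule Con_downward_closed)
  show "\<forall>X Y. Brk X \<in> W \<and> Brk Y \<in> W \<longrightarrow> X = Y" "\<forall>X. Brk X \<in> W \<longrightarrow> rel X (atoms (W - {Brk X}))"
    using W by blast+
qed

lemma consistentB_tilde_Brk:
  assumes "Q \<in> Con"
  shows "consistentB A Con rel (Atom ` tilde rel Q \<union> {Brk Q})"
  unfolding consistentB_def ConStar_def
proof (intro allI impI, intro conjI)
  fix W assume W: "finite W \<and> W \<subseteq> Atom ` tilde rel Q \<union> {Brk Q}"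
  have Q_atoms: "rel Q (atoms W)"
    using W by (intro rel_finite_subset_tilde[OF assms] finite_atoms) (auto simp: atoms_def)
  have "Atom ` tilde rel Q \<union> {Brk Q} \<subseteq> Bset A Con"
    using tilde_subset assms unfolding Bset_def by blast
  with W show "finite W" "W \<subseteq> Bset A Con" by blast+
  show "atoms W \<in> Con"
    using rel_Un_Con[OF Q_atoms] by (rule Con_downward_closed[rotated]) blast
  show "\<forall>X Y. Brk X \<in> W \<and> Brk Y \<in> W \<longrightarrow> X = Y" using W by blast
  show "\<forall>X. Brk X \<in> W \<longrightarrow> rel X (atoms (W - {Brk X}))"
  proof (intro allI impI)
    fix X assume "Brk X \<in> W"
    with W have "X = Q" by blast
    with Q_atoms show "rel X (atoms (W - {Brk X}))" by simp
  qed
qed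

end

theorem lemma3:
  assumes "ans A Con rel"
    and "P \<in> Con" and "Q \<in> Con"
    and "Q \<subseteq> P" and "P \<subseteq> tilde rel Q"
  shows "is_extension A Con rel (Atom ` P) (Atom ` tilde rel Q \<union> {Brk Q})"
proof -
  let ?y = "Atom ` tilde rel Q \<union> {Brk Q}"
  let ?phi = "phi A Con rel (Atom ` P) ?y"
  have y_consistent: "consistentB A Con rel ?y"
    using assms(1,3) by (rule consistentB_tilde_Brk)
  have "Phi A Con rel (Atom ` P) ?y \<subseteq> ?y"
    using assms(5) tilde_Brk_closed_under_Delta by (intro Phi_subset_closed) blast+
  moreover have "?y \<subseteq> Phi A Con rel (Atom ` P) ?y"
  proof -
    have Q_tokens: "Atom ` Q \<subseteq> ?phi 0"
      using assms(4) by auto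
    have Brk_Q: "Brk Q \<in> ?phi (Suc 0)"
      using assms(3) Q_tokens y_consistent
      by (intro phi_Suc_memI[of "Atom ` Q"]) (auto simp: Delta_def insert_absorb)
    have tilde_tokens: "Atom t \<in> ?phi (Suc (Suc 0))" if "t \<in> tilde rel Q" "t \<notin> Q" for t
      using that Brk_Q y_consistent
      by (intro phi_Suc_memI[of "{Brk Q}"]) (auto simp: Delta_def tilde_def insert_absorb)
    show ?thesis
    proof
      fix b assume "b \<in> ?y"
      then consider "b = Brk Q" | t where "b = Atom t" "t \<in> Q"
        | t where "b = Atom t" "t \<in> tilde rel Q" "t \<notin> Q"
        by blast
      then show "b \<in> Phi A Con rel (Atom ` P) ?y"
        by cases (use Q_tokens Brk_Q tilde_tokens in \<open>blast intro: Phi_memI\<close>)+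
    qed
  qed
  ultimately show ?thesis
    using consistentB_Atom_image[OF assms(1,2)] unfolding is_extension_def by blast
qed

end
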